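(* Consider the two-dimensional Poisson regression model with interaction on the design region $\mathcal{X}=[0,\infty)^2$ with parameter vector $\boldsymbol{\beta}=(\beta_0,\beta_1,\beta_2,\beta_{12})^\top$, where $\beta_0\in\mathbb{R}$ is arbitrary, $\beta_1,\beta_2<0$ and $\beta_{12}=0$. Then the design which assigns equal weights $1/4$ to the four settings $\mathbf{x}_0=(0,0)$, $\mathbf{x}_1=(2/|\beta_1|,0)$, $\mathbf{x}_2=(0,2/|\beta_2|)$ and $\mathbf{x}_3=(2/|\beta_1|,2/|\beta_2|)$ is locally $D$-optimal at $\boldsymbol{\beta}$ on $\mathcal{X}$.
   Context: In the two-dimensional Poisson regression model with interaction, an observation $Y$ at setting $\mathbf{x}=(x_1,x_2)$ is Poisson distributed with mean $\lambda(\mathbf{x})=\exp(\mathbf{f}(\mathbf{x})^\top\boldsymbol{\beta})$, where $\mathbf{f}(\mathbf{x})=(1,x_1,x_2,x_1x_2)^\top$ and $\boldsymbol{\beta}=(\beta_0,\beta_1,\beta_2,\beta_{12})^\top$. An (approximate) design $\xi$ on $\mathcal{X}$ is a finite collection of mutually distinct settings $\mathbf{x}_0,\dots,\mathbf{x}_{n-1}\in\mathcal{X}$ with weights $w_i\ge 0$, $\sum_i w_i=1$. Its information matrix is $\mathbf{M}_{\boldsymbol{\beta}}(\xi)=\sum_{i=0}^{n-1} w_i\lambda(\mathbf{x}_i)\mathbf{f}(\mathbf{x}_i)\mathbf{f}(\mathbf{x}_i)^\top$. A design $\xi^*$ is locally $D$-optimal at $\boldsymbol{\beta}$ on $\mathcal{X}$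 if it maximizes $\det\mathbf{M}_{\boldsymbol{\beta}}(\xi)$ over all designs $\xi$ on $\mathcal{X}$. *)

theory Defs
  imports "HOL-Analysis.Analysis"
begin

definition regf :: "real \<times> real \<Rightarrow> real ^ 4" where
  "regf x = vector [1, fst x, snd x, fst x * snd x]"

definition intensity :: "real ^ 4 \<Rightarrow> real \<times> real \<Rightarrow> real" where
  "intensity \<beta> x = exp (regf x \<bullet> \<beta>)"

definition is_design :: "(real \<times> real) set \<Rightarrow> (real \<times> real) set \<Rightarrow> (real \<times> real \<Rightarrow> real) \<Rightarrow> bool" where
  "is_design X S w \<longleftrightarrow> finite S \<and> S \<noteq> {} \<and> S \<subseteq> X \<and> (\<forall>x\<in>S. w x \<ge> 0) \<and> (\<Sum>x\<in>S. w x) = 1"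

definition info_matrix :: "real ^ 4 \<Rightarrow> (real \<times> real) set \<Rightarrow> (real \<times> real \<Rightarrow> real) \<Rightarrow> real ^ 4 ^ 4" where
  "info_matrix \<beta> S w = (\<Sum>x\<in>S. (w x * intensity \<beta> x) *\<^sub>R
      (\<chi> i j. regf x $ i * regf x $ j))"

definition locally_D_optimal :: "real ^ 4 \<Rightarrow> (real \<times> real) set \<Rightarrow> (real \<times> real) set \<Rightarrow> (real \<times> real \<Rightarrow> real) \<Rightarrow> bool" where
  "locally_D_optimal \<beta> X S w \<longleftrightarrow> is_design X S w \<and>
     (\<forall>S' w'. is_design X S' w' \<longrightarrow> det (info_matrix \<beta> S' w') \<le> det (info_matrix \<beta> S w))"

end

(*
  Put r_i = -b_i x_i / 2, which is nonnegative on the design region. Then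
  sqrt(lambda(x)) f(x) = exp(b0/2) (e^(-r1), x1 e^(-r1)) (x) (e^(-r2), x2 e^(-r2)), a Kronecker
  product, and x_i e^(-r_i) is a multiple of r_i e^(-r_i). In the basis psi0(r) = (1 - r) e^(-r),
  psi1(r) = r e^(1-r) of span{e^(-r), r e^(-r)}, which is dual to the nodes r = 0 and r = 1, this
  becomes sqrt(lambda(x)) f(x) = B psi(x) with a fixed matrix B and psi(x) = psi(r1) (x) psi(r2).
  Hence M(xi) = B G(xi) B^T, where G(xi) is the moment matrix of psi, and
  det M(xi) = det(B)^2 det G(xi). The four support points are mapped by psi to the standard basis,
  so G = I/4 for the equal-weight design. For any design, G is positive semidefinite with
  trace sum_x w(x) |psi(x)|^2 \<le> 1, because psi0^2 + psi1^2 \<le> 1 on [0, oo); Hadamard's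
  inequality and AM-GM then give det G \<le> (trace G / 4)^4 \<le> 4^(-4).
*)

theory Submission
  imports Defs
begin

lemma vector_4 [simp]:
  "(vector [a, b, c, d] :: 'a::zero^4) $ 1 = a" "(vector [a, b, c, d] :: 'a^4) $ 2 = b"
  "(vector [a, b, c, d] :: 'a^4) $ 3 = c" "(vector [a, b, c, d] :: 'a^4) $ 4 = d"
  unfolding vector_def by simp_all

definition pos_semidef :: "real^'n^'n \<Rightarrow> bool" where
  "pos_semidef A \<longleftrightarrow> transpose A = A \<and> (\<forall>x. 0 \<le> x \<bullet> (A *v x))"

lemma pos_semidef_sym: "pos_semidef A \<Longrightarrow> A$j$i = A$i$j"
  unfolding pos_semidef_def by (metis transpose_def vec_lambda_beta)

lemma quadratic_form_two_axes:
  fixes A :: "real^'n^'n"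
  shows "(s *\<^sub>R axis i 1 + t *\<^sub>R axis j 1) \<bullet> (A *v (s *\<^sub>R axis i 1 + t *\<^sub>R axis j 1))
       = s\<^sup>2 * A$i$i + s * t * (A$i$j + A$j$i) + t\<^sup>2 * A$j$j"
  by (simp add: matrix_vector_right_distrib matrix_vector_mult_scaleR matrix_vector_mult_basis
      inner_add_left inner_add_right inner_axis' column_def power2_eq_square algebra_simps)

lemma pos_semidef_diag_nonneg:
  assumes "pos_semidef A" shows "0 \<le> A$i$i"
proof -
  have "0 \<le> (1 *\<^sub>R axis i 1 + 0 *\<^sub>R axis i 1) \<bullet> (A *v (1 *\<^sub>R axis i 1 + 0 *\<^sub>R axis i 1))"
    using assms unfolding pos_semidef_def by blast
  then show ?thesis unfolding quadratic_form_two_axes by simp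
qed

lemma pos_semidef_zero_diag_imp_zero:
  assumes A: "pos_semidef A" and "A$i$i = 0" shows "A$i$j = 0"
proof (rule ccontr)
  assume nz: "A$i$j \<noteq> 0"
  define t where "t = - (A$j$j + 1) / (2 * A$i$j)"
  have "0 \<le> (t *\<^sub>R axis i 1 + 1 *\<^sub>R axis j 1) \<bullet> (A *v (t *\<^sub>R axis i 1 + 1 *\<^sub>R axis j 1))"
    using A unfolding pos_semidef_def by blast
  also have "\<dots> = -1"
    unfolding quadratic_form_two_axes using nz \<open>A$i$i = 0\<close> pos_semidef_sym[OF A, of i j]
    by (simp add: t_def field_simps)
  finally show False by simp
qed

lemma pos_semidef_congruence:
  fixes A :: "real^'n^'n" and C :: "real^'n^'m"
  assumes "pos_semidef A" shows "pos_semidef (C ** A ** transpose C)"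
  unfolding pos_semidef_def
proof (intro conjI allI)
  show "transpose (C ** A ** transpose C) = C ** A ** transpose C"
    using assms by (simp add: pos_semidef_def matrix_transpose_mul matrix_mul_assoc)
  fix x :: "real^'m"
  have "x \<bullet> ((C ** A ** transpose C) *v x) = (transpose C *v x) \<bullet> (A *v (transpose C *v x))"
    by (simp add: matrix_vector_mul_assoc[symmetric] dot_lmul_matrix[symmetric])
  then show "0 \<le> x \<bullet> ((C ** A ** transpose C) *v x)"
    using assms unfolding pos_semidef_def by simp
qed

definition gauss_transform :: "real^'n \<Rightarrow> 'n \<Rightarrow> real^'n^'n" where
  "gauss_transform v k = (\<chi> i j. (if i = j then 1 else 0) - (if j = k then v$i else 0))"

lemma gauss_transform_congruence_nth:
  "(gauss_transform v k ** A ** transpose (gauss_transform v k))$i$j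
     = A$i$j - v$i * A$k$j - v$j * A$i$k + v$i * v$j * A$k$k"
  by (simp add: gauss_transform_def matrix_matrix_mult_def transpose_def algebra_simps
      sum_subtractf sum.distrib if_distrib[of "\<lambda>x. x * _"] if_distrib[of "\<lambda>x. _ * x"] cong: if_cong)

lemma det_gauss_transform:
  fixes v :: "real^'n"
  assumes "v$k = 0" shows "det (gauss_transform v k) = 1"
proof -
  have "- v = (\<Sum>j\<in>UNIV - {k}. (- v$j) *s row j (mat 1 :: real^'n^'n))"
    using assms by (simp add: vec_eq_iff row_def mat_def sum_negf if_distrib cong: if_cong)
  also have "\<dots> \<in> vec.span {row j (mat 1 :: real^'n^'n) |j. j \<noteq> k}"
    by (intro vec.span_sum vec.span_scale vec.span_base) auto
  finally have "det (\<chi> r. if r = k then row k (mat 1) + - v else row r (mat 1 :: real^'n^'n)) = det (mat 1 :: real^'n^'n)"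
    by (rule det_row_span)
  moreover have "(\<chi> r. if r = k then row k (mat 1) + - v else row r (mat 1 :: real^'n^'n)) = transpose (gauss_transform v k)"
    by (simp add: vec_eq_iff row_def mat_def gauss_transform_def transpose_def)
  ultimately show ?thesis by simp
qed

(* One step of symmetric Gaussian elimination with pivot k; a zero pivot forces row k to vanish. *)
lemma pos_semidef_clear_row:
  fixes B :: "real^'n^'n"
  assumes B: "pos_semidef B"
  obtains B' where "pos_semidef B'" "det B' = det B" "\<And>i. B'$i$i \<le> B$i$i"
    "\<And>j. j \<noteq> k \<Longrightarrow> B'$k$j = 0"
    "\<And>i j. \<forall>l. l \<noteq> i \<longrightarrow> B$i$l = 0 \<Longrightarrow> j \<noteq> i \<Longrightarrow> B'$i$j = 0"
proof (cases "B$k$k = 0")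
  case True
  show ?thesis by (rule that[of B]) (use assms pos_semidef_zero_diag_imp_zero[OF B True] in auto)
next
  case False
  define v where "v = (\<chi> i. if i = k then 0 else B$i$k / B$k$k)"
  define B' where "B' = gauss_transform v k ** B ** transpose (gauss_transform v k)"
  have sym: "\<And>i j. B$j$i = B$i$j" using pos_semidef_sym[OF B] .
  have "0 < B$k$k" using False pos_semidef_diag_nonneg[OF B, of k] by simp
  have B'_nth: "B'$i$j = B$i$j - v$i * B$k$j - v$j * B$i$k + v$i * v$j * B$k$k" for i j
    unfolding B'_def by (rule gauss_transform_congruence_nth)
  show ?thesis
  proof (rule that[of B'])
    show "pos_semidef B'" unfolding B'_def using B by (rule pos_semidef_congruence)
    show "det B' = det B"
      unfolding B'_def det_mul det_transpose by (simp add: det_gauss_transform v_def)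
    show "B'$i$i \<le> B$i$i" for i
    proof -
      have "B'$i$i = B$i$i - (v$i)\<^sup>2 * B$k$k"
        using False by (simp add: B'_nth v_def sym[of k i] power2_eq_square field_simps)
      then show ?thesis using \<open>0 < B$k$k\<close> by simp
    qed
    show "B'$k$j = 0" if "j \<noteq> k" for j
      using that False by (simp add: B'_nth v_def sym[of k j])
    show "B'$i$j = 0" if "\<forall>l. l \<noteq> i \<longrightarrow> B$i$l = 0" "j \<noteq> i" for i j
      using that sym[of k i] sym[of k j] by (cases "i = k") (auto simp: B'_nth v_def)
  qed
qed

lemma pos_semidef_diagonal_reduction:
  fixes A :: "real^'n^'n"
  assumes "pos_semidef A"
  obtains B where "pos_semidef B" "det B = det A" "\<And>i. B$i$i \<le> A$i$i"
    "\<And>i j. i \<noteq> j \<Longrightarrow> B$i$j = 0"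
proof -
  have "\<exists>B. pos_semidef B \<and> det B = det A \<and> (\<forall>i. B$i$i \<le> A$i$i)
          \<and> (\<forall>i\<in>P. \<forall>j. j \<noteq> i \<longrightarrow> B$i$j = 0)" for P :: "'n set"
    using finite[of P]
  proof (induction P rule: finite_induct)
    case empty
    then show ?case using assms by auto
  next
    case (insert k P)
    then obtain B where B: "pos_semidef B" "det B = det A" "\<forall>i. B$i$i \<le> A$i$i"
      "\<forall>i\<in>P. \<forall>j. j \<noteq> i \<longrightarrow> B$i$j = 0" by blast
    obtain B' where B': "pos_semidef B'" "det B' = det B" "\<And>i. B'$i$i \<le> B$i$i"
      "\<And>j. j \<noteq> k \<Longrightarrow> B'$k$j = 0"
      "\<And>i j. \<forall>l. l \<noteq> i \<longrightarrow> B$i$l = 0 \<Longrightarrow> j \<noteq> i \<Longrightarrow> B'$i$j = 0"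
      using pos_semidef_clear_row[OF B(1), of k] by blast
    have "\<forall>i. B'$i$i \<le> A$i$i" using B(3) B'(3) order_trans by blast
    with B B' show ?case by auto
  qed
  from this[of UNIV] obtain B where "pos_semidef B" "det B = det A" "\<forall>i. B$i$i \<le> A$i$i"
    "\<forall>i j. j \<noteq> i \<longrightarrow> B$i$j = 0" by blast
  then show ?thesis using that[of B] by auto
qed

theorem Hadamard_det_le_prod_diag:
  fixes A :: "real^'n^'n"
  assumes "pos_semidef A"
  shows "det A \<le> (\<Prod>i\<in>UNIV. A$i$i)"
proof -
  obtain B where B: "pos_semidef B" "det B = det A" "\<And>i. B$i$i \<le> A$i$i"
    "\<And>i j. i \<noteq> j \<Longrightarrow> B$i$j = 0"
    using pos_semidef_diagonal_reduction[OF assms] by blast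
  have "det A = (\<Prod>i\<in>UNIV. B$i$i)" using B(2,4) det_diagonal[of B] by simp
  also have "\<dots> \<le> (\<Prod>i\<in>UNIV. A$i$i)"
    by (intro prod_mono conjI pos_semidef_diag_nonneg B(1,3))
  finally show ?thesis .
qed

lemma prod_le_mean_power:
  fixes x :: "'a \<Rightarrow> real"
  assumes "finite S" "S \<noteq> {}" "\<And>i. i \<in> S \<Longrightarrow> 0 \<le> x i"
  shows "(\<Prod>i\<in>S. x i) \<le> ((\<Sum>i\<in>S. x i) / card S) ^ card S"
proof -
  have n: "card S \<noteq> 0" using assms by simp
  have "(\<Prod>i\<in>S. x i) = ((\<Prod>i\<in>S. x i) powr (1 / card S)) ^ card S"
    using n assms(3) by (simp add: powr_realpow'[symmetric] powr_powr prod_nonneg)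
  also have "\<dots> \<le> ((\<Sum>i\<in>S. x i) / card S) ^ card S"
    using arith_geom_mean[OF assms] by (intro power_mono) (simp_all add: sum_divide_distrib)
  finally show ?thesis .
qed

corollary det_le_trace_power:
  fixes A :: "real^'n^'n"
  assumes "pos_semidef A"
  shows "det A \<le> (trace A / CARD('n)) ^ CARD('n)"
  using Hadamard_det_le_prod_diag[OF assms]
    prod_le_mean_power[of UNIV "\<lambda>i. A$i$i"] pos_semidef_diag_nonneg[OF assms]
  unfolding trace_def by simp

definition moment_matrix :: "'a set \<Rightarrow> ('a \<Rightarrow> real) \<Rightarrow> ('a \<Rightarrow> real^'n) \<Rightarrow> real^'n^'n" where
  "moment_matrix S w a = (\<Sum>x\<in>S. w x *\<^sub>R (\<chi> i j. a x $ i * a x $ j))"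

lemma moment_matrix_nth: "moment_matrix S w a $ i $ j = (\<Sum>x\<in>S. w x * a x $ i * a x $ j)"
  unfolding moment_matrix_def by (simp add: sum_component mult.assoc)

lemma moment_matrix_congruence:
  fixes C :: "real^'n^'m"
  shows "C ** moment_matrix S w a ** transpose C = moment_matrix S w (\<lambda>x. C *v a x)"
  by (simp add: vec_eq_iff moment_matrix_nth matrix_matrix_mult_def matrix_vector_mult_def
      transpose_def sum_distrib_left sum_distrib_right algebra_simps sum.swap[of _ S];
      intro allI, rule sum.cong[OF refl], subst sum.swap, simp add: mult_ac)

lemma moment_matrix_scaleR:
  "moment_matrix S w (\<lambda>x. c x *\<^sub>R a x) = moment_matrix S (\<lambda>x. w x * (c x)\<^sup>2) a"
  by (simp add: vec_eq_iff moment_matrix_nth power2_eq_square algebra_simps)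

lemma pos_semidef_moment_matrix:
  assumes "\<And>x. x \<in> S \<Longrightarrow> 0 \<le> w x"
  shows "pos_semidef (moment_matrix S w a)"
  unfolding pos_semidef_def
proof (intro conjI allI)
  show "transpose (moment_matrix S w a) = moment_matrix S w a"
    by (simp add: vec_eq_iff transpose_def moment_matrix_nth mult_ac)
  fix y
  have "y \<bullet> (moment_matrix S w a *v y) = (\<Sum>x\<in>S. w x * (a x \<bullet> y)\<^sup>2)"
    by (simp add: moment_matrix_nth matrix_vector_mult_def inner_vec_def power2_eq_square
        sum_distrib_left sum_distrib_right algebra_simps sum.swap[of _ S])
  also have "\<dots> \<ge> 0" using assms by (simp add: sum_nonneg)
  finally show "0 \<le> y \<bullet> (moment_matrix S w a *v y)" .
qed

lemma trace_moment_matrix: "trace (moment_matrix S w a) = (\<Sum>x\<in>S. w x * (norm (a x))\<^sup>2)"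
  by (simp add: trace_def moment_matrix_nth power2_norm_eq_inner inner_vec_def
      sum_distrib_left mult.assoc sum.swap[of _ S])

lemma exp_ge_cubic_Taylor: "1 + x + x\<^sup>2 / 2 + x ^ 3 / 6 \<le> exp (x::real)"
proof -
  obtain t where "exp x = (\<Sum>m<4. x ^ m / fact m) + exp t / fact 4 * x ^ 4"
    using Maclaurin_exp_le[of x 4] by blast
  moreover have "(\<Sum>m<4. x ^ m / fact m) = 1 + x + x\<^sup>2 / 2 + x ^ 3 / 6"
    by (simp add: numeral_eq_Suc fact_numeral lessThan_Suc)
  moreover have "0 \<le> exp t / fact 4 * x ^ 4" by (simp add: zero_le_even_power)
  ultimately show ?thesis by linarith
qed

(* Equality holds at r = 0 and r = 1. The quadratic Taylor bound of exp at 0 covers r \<le> 1/2,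
   the cubic Taylor bound at 1 (valid on the whole line) covers r \<ge> 1/2. *)
lemma sq_plus_exp_sq_le_exp:
  fixes r :: real
  assumes "0 \<le> r"
  shows "(1 - r)\<^sup>2 + (exp 1 * r)\<^sup>2 \<le> exp (2 * r)"
proof -
  define E :: real where "E = (exp 1)\<^sup>2"
  have "4 \<le> E" "E \<le> 9"
    unfolding E_def using exp_ge_add_one_self[of 1] exp_le
    by (auto intro: power_mono[of 2 "exp 1" 2, simplified] power_mono[of "exp 1" 3 2, simplified])
  show ?thesis
  proof (cases "r \<le> 1/2")
    case True
    have "(E - 1) * r \<le> 8 * (1/2)" using \<open>E \<le> 9\<close> True assms by (intro mult_mono) auto
    then have "(E - 1) * r * r \<le> 4 * r" using assms by (intro mult_right_mono) auto
    then have "(1 - r)\<^sup>2 + E * r\<^sup>2 \<le> 1 + 2 * r + (2 * r)\<^sup>2 / 2"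
      by (simp add: power2_eq_square algebra_simps)
    also have "\<dots> \<le> exp (2 * r)" using assms by (intro exp_lower_Taylor_quadratic) simp
    finally show ?thesis by (simp add: E_def power_mult_distrib)
  next
    case False
    define y where "y = r - 1"
    have "y\<^sup>2 \<le> E * (y\<^sup>2 + 4/3 * y ^ 3)"
    proof -
      have "4 * (1/3) \<le> E * (1 + 4/3 * y)"
        using \<open>4 \<le> E\<close> False unfolding y_def by (intro mult_mono) (auto simp: field_simps)
      then have "1 \<le> E * (1 + 4/3 * y)" by simp
      then have "y\<^sup>2 * 1 \<le> y\<^sup>2 * (E * (1 + 4/3 * y))" by (intro mult_left_mono) auto
      then show ?thesis by (simp add: power2_eq_square power3_eq_cube algebra_simps)
    qed
    moreover have "E * (1 + 2 * y + (2 * y)\<^sup>2 / 2 + (2 * y) ^ 3 / 6) - ((1 - r)\<^sup>2 + E * r\<^sup>2)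
        = E * (y\<^sup>2 + 4/3 * y ^ 3) - y\<^sup>2"
      unfolding y_def by (simp add: power2_eq_square power3_eq_cube field_simps)
    ultimately have "(1 - r)\<^sup>2 + E * r\<^sup>2 \<le> E * (1 + 2 * y + (2 * y)\<^sup>2 / 2 + (2 * y) ^ 3 / 6)"
      by linarith
    also have "\<dots> \<le> E * exp (2 * y)"
      using \<open>4 \<le> E\<close> by (intro mult_left_mono exp_ge_cubic_Taylor) simp
    also have "\<dots> = exp (2 * r)"
      by (simp add: E_def y_def power2_eq_square exp_add[symmetric])
    finally show ?thesis by (simp add: E_def power_mult_distrib)
  qed
qed

definition psi0 :: "real \<Rightarrow> real" where "psi0 r = (1 - r) * exp (- r)"
definition psi1 :: "real \<Rightarrow> real" where "psi1 r = r * exp (1 - r)"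

lemma psi_at_nodes: "psi0 0 = 1" "psi1 0 = 0" "psi0 1 = 0" "psi1 1 = 1"
  by (simp_all add: psi0_def psi1_def)

lemma exp_minus_psi_expansion: "exp (- r) = psi0 r + psi1 r / exp 1"
  by (simp add: psi0_def psi1_def exp_diff field_simps exp_minus)

lemma psi1_alt: "psi1 r = exp 1 * r * exp (- r)"
  by (simp add: psi1_def exp_diff exp_minus field_simps)

lemma psi0_sq_add_psi1_sq_le_1:
  assumes "0 \<le> r" shows "(psi0 r)\<^sup>2 + (psi1 r)\<^sup>2 \<le> 1"
proof -
  have "(psi0 r)\<^sup>2 + (psi1 r)\<^sup>2 = exp (- (2 * r)) * ((1 - r)\<^sup>2 + (exp 1 * r)\<^sup>2)"
    by (simp add: psi0_def psi1_alt power2_eq_square exp_add[symmetric] algebra_simps)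
  also have "\<dots> \<le> exp (- (2 * r)) * exp (2 * r)"
    using sq_plus_exp_sq_le_exp[OF assms] by (intro mult_left_mono) auto
  also have "\<dots> = 1" by (simp add: exp_minus)
  finally show ?thesis .
qed

definition psi_regf :: "real \<Rightarrow> real \<Rightarrow> real \<times> real \<Rightarrow> real^4" where
  "psi_regf b1 b2 x = (let r1 = - b1 * fst x / 2; r2 = - b2 * snd x / 2 in
     vector [psi0 r1 * psi0 r2, psi1 r1 * psi0 r2, psi0 r1 * psi1 r2, psi1 r1 * psi1 r2])"

lemma norm_psi_regf_le_1:
  assumes "b1 * fst x \<le> 0" "b2 * snd x \<le> 0"
  shows "norm (psi_regf b1 b2 x) \<le> 1"
proof -
  define r1 where "r1 = - b1 * fst x / 2"
  define r2 where "r2 = - b2 * snd x / 2"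
  have norm4: "(norm v)\<^sup>2 = (v$1)\<^sup>2 + (v$2)\<^sup>2 + (v$3)\<^sup>2 + (v$4)\<^sup>2" for v :: "real^4"
    unfolding power2_norm_eq_inner inner_vec_def sum_4 by (simp add: power2_eq_square)
  have "psi_regf b1 b2 x = vector [psi0 r1 * psi0 r2, psi1 r1 * psi0 r2, psi0 r1 * psi1 r2, psi1 r1 * psi1 r2]"
    by (simp add: psi_regf_def r1_def r2_def Let_def)
  then have "(norm (psi_regf b1 b2 x))\<^sup>2 = ((psi0 r1)\<^sup>2 + (psi1 r1)\<^sup>2) * ((psi0 r2)\<^sup>2 + (psi1 r2)\<^sup>2)"
    unfolding norm4 by (simp add: power_mult_distrib algebra_simps)
  also have "\<dots> \<le> 1 * 1"
    using psi0_sq_add_psi1_sq_le_1[of r1] psi0_sq_add_psi1_sq_le_1[of r2] assms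
    by (intro mult_mono) (auto simp: r1_def r2_def)
  finally show ?thesis by (simp add: power_le_one_iff)
qed

(* Kronecker product, scaled by exp(b0/2), of the matrices [[1, 1/e], [0, c_i]] expressing
   (e^(-r_i), x_i e^(-r_i)) in the basis (psi0 r_i, psi1 r_i). *)
definition transform_matrix :: "real \<Rightarrow> real \<Rightarrow> real \<Rightarrow> real^4^4" where
  "transform_matrix b0 b1 b2 = (let e = exp 1; c1 = 2 / (e * - b1); c2 = 2 / (e * - b2) in
     exp (b0 / 2) *\<^sub>R vector [vector [1, 1 / e, 1 / e, 1 / e\<^sup>2], vector [0, c1, 0, c1 / e],
                                vector [0, 0, c2, c2 / e], vector [0, 0, 0, c1 * c2]])"

lemma transform_matrix_psi_regf:
  assumes "b1 \<noteq> 0" "b2 \<noteq> 0"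
  shows "transform_matrix b0 b1 b2 *v psi_regf b1 b2 x
       = exp ((regf x \<bullet> vector [b0, b1, b2, 0]) / 2) *\<^sub>R regf x"
proof -
  define r1 where "r1 = - b1 * fst x / 2"
  define r2 where "r2 = - b2 * snd x / 2"
  define c1 where "c1 = 2 / (exp 1 * - b1)"
  define c2 where "c2 = 2 / (exp 1 * - b2)"
  have e1: "exp (- r1) = psi0 r1 + psi1 r1 / exp 1" and e2: "exp (- r2) = psi0 r2 + psi1 r2 / exp 1"
    by (rule exp_minus_psi_expansion)+
  have x1: "fst x * exp (- r1) = c1 * psi1 r1" and x2: "snd x * exp (- r2) = c2 * psi1 r2"
    using assms by (simp_all add: psi1_alt r1_def r2_def c1_def c2_def field_simps)
  have "exp ((regf x \<bullet> vector [b0, b1, b2, 0]) / 2) *\<^sub>R regf x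
      = exp (b0 / 2) *\<^sub>R vector [exp (- r1) * exp (- r2), (fst x * exp (- r1)) * exp (- r2),
                                 exp (- r1) * (snd x * exp (- r2)), (fst x * exp (- r1)) * (snd x * exp (- r2))]"
    by (simp add: vec_eq_iff forall_4 regf_def inner_vec_def sum_4 r1_def r2_def
        exp_add[symmetric] add_divide_distrib algebra_simps)
  also have "\<dots> = transform_matrix b0 b1 b2 *v psi_regf b1 b2 x"
    unfolding x1 x2 unfolding e1 e2 using assms
    by (simp add: vec_eq_iff forall_4 transform_matrix_def psi_regf_def matrix_vector_mult_def sum_4
        Let_def r1_def r2_def c1_def c2_def power2_eq_square field_simps)
  finally show ?thesis ..
qed

lemma info_matrix_factorization:
  assumes "b1 \<noteq> 0" "b2 \<noteq> 0"
  shows "info_matrix (vector [b0, b1, b2, 0]) S w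
       = transform_matrix b0 b1 b2 ** moment_matrix S w (psi_regf b1 b2) ** transpose (transform_matrix b0 b1 b2)"
proof -
  let ?\<beta> = "vector [b0, b1, b2, 0] :: real^4"
  have "intensity ?\<beta> x = (exp ((regf x \<bullet> ?\<beta>) / 2))\<^sup>2" for x
    by (simp add: intensity_def power2_eq_square exp_add[symmetric])
  then have "info_matrix ?\<beta> S w = moment_matrix S w (\<lambda>x. exp ((regf x \<bullet> ?\<beta>) / 2) *\<^sub>R regf x)"
    unfolding moment_matrix_scaleR by (simp add: info_matrix_def moment_matrix_def)
  also have "\<dots> = moment_matrix S w (\<lambda>x. transform_matrix b0 b1 b2 *v psi_regf b1 b2 x)"
    by (simp add: transform_matrix_psi_regf[OF assms])
  finally show ?thesis by (simp add: moment_matrix_congruence)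
qed

lemma det_moment_matrix_le:
  fixes a :: "'a \<Rightarrow> real^'n"
  assumes "\<And>x. x \<in> S \<Longrightarrow> 0 \<le> w x" "(\<Sum>x\<in>S. w x) = 1" "\<And>x. x \<in> S \<Longrightarrow> norm (a x) \<le> 1"
  shows "det (moment_matrix S w a) \<le> (1 / CARD('n)) ^ CARD('n)"
proof -
  have "trace (moment_matrix S w a) \<le> (\<Sum>x\<in>S. w x * 1)"
    unfolding trace_moment_matrix using assms(1,3)
    by (intro sum_mono mult_left_mono) (auto simp: power_le_one)
  moreover have "0 \<le> trace (moment_matrix S w a)"
    unfolding trace_moment_matrix using assms(1) by (simp add: sum_nonneg)
  ultimately have "(trace (moment_matrix S w a) / CARD('n)) ^ CARD('n) \<le> (1 / CARD('n)) ^ CARD('n)"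
    using assms(2) by (intro power_mono divide_right_mono) auto
  with det_le_trace_power[OF pos_semidef_moment_matrix[of S w a, OF assms(1)]] show ?thesis
    by linarith
qed

lemma
  assumes "b1 < 0" "b2 < 0"
  shows psi_regf_origin: "psi_regf b1 b2 (0, 0) = axis 1 1"
    and psi_regf_node1: "psi_regf b1 b2 (2 / \<bar>b1\<bar>, 0) = axis 2 1"
    and psi_regf_node2: "psi_regf b1 b2 (0, 2 / \<bar>b2\<bar>) = axis 3 1"
    and psi_regf_node12: "psi_regf b1 b2 (2 / \<bar>b1\<bar>, 2 / \<bar>b2\<bar>) = axis 4 1"
  using assms by (simp_all add: psi_regf_def psi_at_nodes vec_eq_iff forall_4 axis_def)

lemma det_psi_moment_matrix_optimal:
  assumes "b1 < 0" "b2 < 0"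
  shows "det (moment_matrix {(0, 0), (2 / \<bar>b1\<bar>, 0), (0, 2 / \<bar>b2\<bar>), (2 / \<bar>b1\<bar>, 2 / \<bar>b2\<bar>)}
                (\<lambda>_. 1 / 4) (psi_regf b1 b2)) = (1 / 4) ^ 4"
proof -
  define p1 where "p1 = 2 / \<bar>b1\<bar>"
  define p2 where "p2 = 2 / \<bar>b2\<bar>"
  have "p1 \<noteq> 0" "p2 \<noteq> 0" using assms by (simp_all add: p1_def p2_def)
  moreover note psi_regf_origin[OF assms] psi_regf_node1[OF assms, folded p1_def]
    psi_regf_node2[OF assms, folded p2_def] psi_regf_node12[OF assms, folded p1_def p2_def]
  ultimately have "moment_matrix {(0, 0), (p1, 0), (0, p2), (p1, p2)} (\<lambda>_. 1 / 4) (psi_regf b1 b2)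
      = (1 / 4 :: real) *\<^sub>R mat 1"
    by (simp add: vec_eq_iff forall_4 moment_matrix_nth axis_def mat_def)
  then show ?thesis unfolding p1_def p2_def by (simp add: det_diagonal mat_def)
qed

lemma det_psi_moment_matrix_le:
  assumes "b1 < 0" "b2 < 0" and "is_design {x. 0 \<le> fst x \<and> 0 \<le> snd x} S w"
  shows "det (moment_matrix S w (psi_regf b1 b2)) \<le> (1 / 4) ^ 4"
proof -
  have "norm (psi_regf b1 b2 x) \<le> 1" if "x \<in> S" for x
    using assms that unfolding is_design_def
    by (intro norm_psi_regf_le_1) (auto simp: mult_nonpos_nonneg)
  then show ?thesis
    using det_moment_matrix_le[of S w "psi_regf b1 b2"] assms(3) unfolding is_design_def by simp
qed

theorem theorem1:
  fixes b0 b1 b2 :: real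
  assumes "b1 < 0" and "b2 < 0"
  shows "locally_D_optimal (vector [b0, b1, b2, 0])
           {x. 0 \<le> fst x \<and> 0 \<le> snd x}
           {(0, 0), (2 / \<bar>b1\<bar>, 0), (0, 2 / \<bar>b2\<bar>), (2 / \<bar>b1\<bar>, 2 / \<bar>b2\<bar>)}
           (\<lambda>_. 1 / 4)"
  unfolding locally_D_optimal_def
proof (intro conjI allI impI)
  let ?X = "{x :: real \<times> real. 0 \<le> fst x \<and> 0 \<le> snd x}"
  let ?S = "{(0, 0), (2 / \<bar>b1\<bar>, 0), (0, 2 / \<bar>b2\<bar>), (2 / \<bar>b1\<bar>, 2 / \<bar>b2\<bar>)}"
  let ?M = "info_matrix (vector [b0, b1, b2, 0])"
  define B where "B = transform_matrix b0 b1 b2"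
  have det_M: "det (?M S w) = (det B)\<^sup>2 * det (moment_matrix S w (psi_regf b1 b2))" for S w
    using assms by (simp add: info_matrix_factorization B_def det_mul power2_eq_square)
  show "is_design ?X ?S (\<lambda>_. 1 / 4)"
    using assms by (simp add: is_design_def)
  fix S' w' assume "is_design ?X S' w'"
  then have "det (?M S' w') \<le> (det B)\<^sup>2 * (1 / 4) ^ 4"
    unfolding det_M using assms by (intro mult_left_mono det_psi_moment_matrix_le) auto
  also have "\<dots> = det (?M ?S (\<lambda>_. 1 / 4))"
    unfolding det_M using det_psi_moment_matrix_optimal[OF assms] by simp
  finally show "det (?M S' w') \<le> det (?M ?S (\<lambda>_. 1 / 4))" .
qed

end
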